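(* Let $p_1\ne p_2$ be primes and $a,b>0$ integers, and let $n=p_1^a p_2^b$. Then for every integer $k$ with $1\le k\le n-1$, $\binom{n}{k}$ is divisible by $p_1$ or by $p_2$ (i.e., $n$ satisfies Condition 1 with $p_1$ and $p_2$).
   Context: A positive integer $n$ satisfies Condition 1 with primes $p$ and $q$ if for all integers $k$ with $1\le k\le n-1$ the binomial coefficient $\binom{n}{k}$ is divisible by at least one of $p$ or $q$. *)

theory Defs
  imports "HOL-Computational_Algebra.Primes"
begin

definition condition1 :: "nat \<Rightarrow> nat \<Rightarrow> nat \<Rightarrow> bool" where
  "condition1 n p q \<longleftrightarrow> (\<forall>k::nat. 1 \<le> k \<and> k \<le> n - 1 \<longrightarrow> p dvd (n choose k) \<or> q dvd (n choose k))"

end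

theory Submission
  imports Defs
begin

text \<open>Since \<open>k * (n choose k) = n * (n - 1 choose k - 1)\<close>, a binomial coefficient
  \<open>n choose k\<close> with \<open>0 < k < n\<close> is never coprime to \<open>n\<close>. For \<open>n = p1 ^ a * p2 ^ b\<close>
  this means one of the two primes divides it.\<close>

lemma dvd_index_if_coprime_binomial:
  fixes n k :: nat
  assumes "coprime n (n choose k)" "0 < k"
  shows "n dvd k"
proof -
  have "n dvd k * (n choose k)"
    using times_binomial_minus1_eq[OF assms(2), of n] by simp
  with assms(1) show ?thesis
    using coprime_dvd_mult_left_iff by blast
qed

lemma not_coprime_binomial:
  fixes n k :: nat
  assumes "0 < k" "k < n"
  shows "\<not> coprime n (n choose k)"
  using dvd_index_if_coprime_binomial[of n k] assms nat_dvd_not_less by blast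

theorem mainTheorem4:
  fixes p1 p2 a b n :: nat
  assumes "prime p1" and "prime p2" and "p1 \<noteq> p2"
    and "a > 0" and "b > 0"
    and "n = p1 ^ a * p2 ^ b"
  shows "condition1 n p1 p2"
  unfolding condition1_def
proof (intro allI impI)
  fix k :: nat
  assume k: "1 \<le> k \<and> k \<le> n - 1"
  have "0 < n"
    using assms(1,2,6) prime_gt_0_nat by simp
  with k have "\<not> coprime n (n choose k)"
    by (intro not_coprime_binomial) auto
  moreover have "coprime n (n choose k)"
    if "\<not> p1 dvd (n choose k)" "\<not> p2 dvd (n choose k)"
    using that assms(1,2,6) by (simp add: prime_imp_coprime)
  ultimately show "p1 dvd (n choose k) \<or> p2 dvd (n choose k)"
    by blast
qed

end
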